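(* Let $g$ be any connected undirected graph with $n$ processors and diameter $diam(g)$, with unique identifiers $id_v \in \{0,\dots,n-1\}$. The protocol $\mathcal{EMSS}$ is self-stabilizing for the mutual exclusion specification $spec_{EM}$ under the unfair distributed daemon $did$.
   Context: Model (state model with shared variables): a distributed system is a connected undirected graph $g=(V,E)$ whose vertices are processors and edges are communication links; $vois(v)$ is the set of neighbours of $v$; $n=|V|$; $diam(g)$ is the diameter of $g$. Each processor $v$ has a unique identity $id_v\in\{0,\dots,n-1\}$. The state of a processor is the value of its variables; a configuration is the tuple of all processor states. A protocol is a set of rules $\langle guard\rangle \to \langle action\rangle$, where the guard is a predicate on the state of the processor and of its neighbours and the action updates the processor's own state. A processor is enabled if one of its guards is true. In a step, a daemon selects a nonempty subset of the enabled processors, and each selected processor atomically executes the action of a true guard, all selected processors reading the configuration at the beginning of the step. An execution is a maximal sequence of configurations linked by steps. The unfair distributed daemon $did$ imposes no constraint on the (nonempty) selected set. The synchronous daemon $ds$ selects all enabled processors at every step. Self-stabilization: a protocol $\pi$ is self-stabilizing for a specification $spec$ under daemon $d$ if, from any configuration, every execution of $\pi$ under $d$ contains a configuration from which every execution of $\pi$ under $d$ satisfies $spec$. Mutual exclusion: each processor $v$ has a predicate $privilege_v$; $v$ is privileged in a configuration $\gamma$ iff $privilege_v$ is true in $\gamma$; if $v$ is privileged in $\gamma$ and is activated during step $(\gamma,\gamma')$, then $v$ executes its critical section during that step. An execution satisfies $spec_{EM}$ if in every configuration at most one processor is privileged (safety) and every processor executes its critical section infinitely often (liveness). Protocol $\mathcal{EMSS}$.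 Let $K=(2n-1)(diam(g)+1)+2$. Bounded clock: the set $H=\{-n,-n+1,\dots,0,\dots,K-1\}$ with increment $\phi(c)=c+1$ if $c<0$ and $\phi(c)=(c+1)\bmod K$ if $c\ge 0$. For an integer $c$ let $\overline{c}\in\{0,\dots,K-1\}$ with $c\equiv \overline c \pmod K$; $d_K(c,c')=\min\{\overline{c-c'},\overline{c'-c}\}$; $c\le_l c'$ iff $0\le \overline{c'-c}\le 1$. Let $init=\{-n,\dots,0\}$, $init^*=\{-n,\dots,-1\}$, $stab=\{0,\dots,K-1\}$, and $\le_{init}$ the usual order of integers on $init$. Each processor $v$ has one variable $r_v\in H$. Predicates: $privilege_v \equiv (r_v = 2n + 2\,diam(g)\,id_v)$; $correct_v(u)\equiv (r_v\in stab)\wedge(r_u\in stab)\wedge(d_K(r_v,r_u)\le 1)$; $tousCorrects_v\equiv \forall u\in vois(v),\ correct_v(u)$; $etapeNorm_v\equiv tousCorrects_v\wedge \forall u\in vois(v),\ r_v\le_l r_u$; $reInit_v\equiv \neg tousCorrects_v \wedge r_v\notin init$; $etapeConv_v\equiv r_v\in init^*\wedge \forall u\in vois(v),\ (r_u\in init \wedge r_v\le_{init} r_u)$. Rules: $NA:: etapeNorm_v \to r_v:=\phi(r_v)$; $CA:: etapeConv_v\to r_v:=\phi(r_v)$; $RA:: reInit_v\to r_v:=-n$. *)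

theory Defs
  imports Main "HOL-Library.Extended_Nat"
begin

definition is_conn_graph :: "'v set \<Rightarrow> ('v \<Rightarrow> 'v \<Rightarrow> bool) \<Rightarrow> bool" where
  "is_conn_graph V E \<longleftrightarrow> finite V \<and> V \<noteq> {}
     \<and> (\<forall>u v. E u v \<longrightarrow> u \<in> V \<and> v \<in> V)
     \<and> (\<forall>u v. E u v \<longrightarrow> E v u)
     \<and> (\<forall>u. \<not> E u u)
     \<and> (\<forall>u\<in>V. \<forall>v\<in>V. E\<^sup>*\<^sup>* u v)"

definition vois :: "('v \<Rightarrow> 'v \<Rightarrow> bool) \<Rightarrow> 'v \<Rightarrow> 'v set" where
  "vois E v = {u. E v u}"

definition nproc :: "'v set \<Rightarrow> nat" where
  "nproc V = card V"

definition gdist :: "('v \<Rightarrow> 'v \<Rightarrow> bool) \<Rightarrow> 'v \<Rightarrow> 'v \<Rightarrow> nat" where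
  "gdist E u v = (LEAST k. (E ^^ k) u v)"

definition diam :: "'v set \<Rightarrow> ('v \<Rightarrow> 'v \<Rightarrow> bool) \<Rightarrow> nat" where
  "diam V E = Max {gdist E u v | u v. u \<in> V \<and> v \<in> V}"

definition Kc :: "'v set \<Rightarrow> ('v \<Rightarrow> 'v \<Rightarrow> bool) \<Rightarrow> int" where
  "Kc V E = (2 * int (nproc V) - 1) * (int (diam V E) + 1) + 2"

definition Hset :: "'v set \<Rightarrow> ('v \<Rightarrow> 'v \<Rightarrow> bool) \<Rightarrow> int set" where
  "Hset V E = {- int (nproc V) .. Kc V E - 1}"

definition phi :: "'v set \<Rightarrow> ('v \<Rightarrow> 'v \<Rightarrow> bool) \<Rightarrow> int \<Rightarrow> int" where
  "phi V E c = (if c < 0 then c + 1 else (c + 1) mod Kc V E)"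

definition bar :: "int \<Rightarrow> int \<Rightarrow> int" where
  "bar K c = c mod K"

definition dK :: "int \<Rightarrow> int \<Rightarrow> int \<Rightarrow> int" where
  "dK K c c' = min (bar K (c - c')) (bar K (c' - c))"

definition le_l :: "int \<Rightarrow> int \<Rightarrow> int \<Rightarrow> bool" where
  "le_l K c c' \<longleftrightarrow> 0 \<le> bar K (c' - c) \<and> bar K (c' - c) \<le> 1"

definition init_set :: "'v set \<Rightarrow> int set" where
  "init_set V = {- int (nproc V) .. 0}"

definition initS_set :: "'v set \<Rightarrow> int set" where
  "initS_set V = {- int (nproc V) .. -1}"

definition stab_set :: "'v set \<Rightarrow> ('v \<Rightarrow> 'v \<Rightarrow> bool) \<Rightarrow> int set" where
  "stab_set V E = {0 .. Kc V E - 1}"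

definition privilege :: "'v set \<Rightarrow> ('v \<Rightarrow> 'v \<Rightarrow> bool) \<Rightarrow> ('v \<Rightarrow> nat) \<Rightarrow> ('v \<Rightarrow> int) \<Rightarrow> 'v \<Rightarrow> bool" where
  "privilege V E ident r v \<longleftrightarrow> r v = 2 * int (nproc V) + 2 * int (diam V E) * int (ident v)"

definition correct :: "'v set \<Rightarrow> ('v \<Rightarrow> 'v \<Rightarrow> bool) \<Rightarrow> ('v \<Rightarrow> int) \<Rightarrow> 'v \<Rightarrow> 'v \<Rightarrow> bool" where
  "correct V E r v u \<longleftrightarrow> r v \<in> stab_set V E \<and> r u \<in> stab_set V E \<and> dK (Kc V E) (r v) (r u) \<le> 1"

definition tousCorrects :: "'v set \<Rightarrow> ('v \<Rightarrow> 'v \<Rightarrow> bool) \<Rightarrow> ('v \<Rightarrow> int) \<Rightarrow> 'v \<Rightarrow> bool" where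
  "tousCorrects V E r v \<longleftrightarrow> (\<forall>u\<in>vois E v. correct V E r v u)"

definition etapeNorm :: "'v set \<Rightarrow> ('v \<Rightarrow> 'v \<Rightarrow> bool) \<Rightarrow> ('v \<Rightarrow> int) \<Rightarrow> 'v \<Rightarrow> bool" where
  "etapeNorm V E r v \<longleftrightarrow> tousCorrects V E r v \<and> (\<forall>u\<in>vois E v. le_l (Kc V E) (r v) (r u))"

definition reInit :: "'v set \<Rightarrow> ('v \<Rightarrow> 'v \<Rightarrow> bool) \<Rightarrow> ('v \<Rightarrow> int) \<Rightarrow> 'v \<Rightarrow> bool" where
  "reInit V E r v \<longleftrightarrow> \<not> tousCorrects V E r v \<and> r v \<notin> init_set V"

definition etapeConv :: "'v set \<Rightarrow> ('v \<Rightarrow> 'v \<Rightarrow> bool) \<Rightarrow> ('v \<Rightarrow> int) \<Rightarrow> 'v \<Rightarrow> bool" where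
  "etapeConv V E r v \<longleftrightarrow> r v \<in> initS_set V
     \<and> (\<forall>u\<in>vois E v. r u \<in> init_set V \<and> r v \<le> r u)"

definition enabled :: "'v set \<Rightarrow> ('v \<Rightarrow> 'v \<Rightarrow> bool) \<Rightarrow> ('v \<Rightarrow> int) \<Rightarrow> 'v \<Rightarrow> bool" where
  "enabled V E r v \<longleftrightarrow> etapeNorm V E r v \<or> etapeConv V E r v \<or> reInit V E r v"

text \<open>Possible new values of r v when v executes the action of a true guard (rules NA, CA, RA).\<close>
definition action_results :: "'v set \<Rightarrow> ('v \<Rightarrow> 'v \<Rightarrow> bool) \<Rightarrow> ('v \<Rightarrow> int) \<Rightarrow> 'v \<Rightarrow> int set" where
  "action_results V E r v =
     (if etapeNorm V E r v then {phi V E (r v)} else {})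
   \<union> (if etapeConv V E r v then {phi V E (r v)} else {})
   \<union> (if reInit V E r v then {- int (nproc V)} else {})"

definition is_config :: "'v set \<Rightarrow> ('v \<Rightarrow> 'v \<Rightarrow> bool) \<Rightarrow> ('v \<Rightarrow> int) \<Rightarrow> bool" where
  "is_config V E r \<longleftrightarrow> (\<forall>v\<in>V. r v \<in> Hset V E)"

definition step_did :: "'v set \<Rightarrow> ('v \<Rightarrow> 'v \<Rightarrow> bool) \<Rightarrow> ('v \<Rightarrow> int) \<Rightarrow> 'v set \<Rightarrow> ('v \<Rightarrow> int) \<Rightarrow> bool" where
  "step_did V E r S r' \<longleftrightarrow> S \<noteq> {} \<and> S \<subseteq> {v \<in> V. enabled V E r v}
     \<and> (\<forall>v\<in>S. r' v \<in> action_results V E r v)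
     \<and> (\<forall>v. v \<notin> S \<longrightarrow> r' v = r v)"

text \<open>An execution from r0: configurations sigma 0, sigma 1, ..., activated sets A i for the
  step (sigma i, sigma (i+1)), and len = number of steps (infinity for infinite executions).\<close>
definition is_exec_did :: "'v set \<Rightarrow> ('v \<Rightarrow> 'v \<Rightarrow> bool) \<Rightarrow> ('v \<Rightarrow> int)
    \<Rightarrow> (nat \<Rightarrow> 'v \<Rightarrow> int) \<Rightarrow> (nat \<Rightarrow> 'v set) \<Rightarrow> enat \<Rightarrow> bool" where
  "is_exec_did V E r0 \<sigma> A len \<longleftrightarrow> \<sigma> 0 = r0
     \<and> (\<forall>i. enat i < len \<longrightarrow> step_did V E (\<sigma> i) (A i) (\<sigma> (Suc i)))
     \<and> (\<forall>k. len = enat k \<longrightarrow> \<not> (\<exists>S r'. step_did V E (\<sigma> k) S r'))"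

definition spec_EM :: "'v set \<Rightarrow> ('v \<Rightarrow> 'v \<Rightarrow> bool) \<Rightarrow> ('v \<Rightarrow> nat)
    \<Rightarrow> (nat \<Rightarrow> 'v \<Rightarrow> int) \<Rightarrow> (nat \<Rightarrow> 'v set) \<Rightarrow> enat \<Rightarrow> bool" where
  "spec_EM V E ident \<sigma> A len \<longleftrightarrow>
     (\<forall>i. enat i \<le> len \<longrightarrow>
        (\<forall>u\<in>V. \<forall>v\<in>V. privilege V E ident (\<sigma> i) u \<and> privilege V E ident (\<sigma> i) v \<longrightarrow> u = v))
   \<and> (\<forall>v\<in>V. infinite {i. enat i < len \<and> v \<in> A i \<and> privilege V E ident (\<sigma> i) v})"

definition self_stab_EMSS_did :: "'v set \<Rightarrow> ('v \<Rightarrow> 'v \<Rightarrow> bool) \<Rightarrow> ('v \<Rightarrow> nat) \<Rightarrow> bool" where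
  "self_stab_EMSS_did V E ident \<longleftrightarrow>
     (\<forall>r0. is_config V E r0 \<longrightarrow>
        (\<forall>\<sigma> A len. is_exec_did V E r0 \<sigma> A len \<longrightarrow>
           (\<exists>i. enat i \<le> len \<and>
              (\<forall>\<sigma>' A' len'. is_exec_did V E (\<sigma> i) \<sigma>' A' len' \<longrightarrow> spec_EM V E ident \<sigma>' A' len'))))"

end

theory Submission
  imports Defs
begin

(* The legitimate configurations are those in which every clock lies in stab and every processor
   is correct with all its neighbours.  The proof has three parts.
   (1) Closure and correctness: legitimate configurations are closed under steps, only rule NA
       can fire in them, and lifting the clocks along shortest paths (each edge shifts the clock by
       at most 1 modulo K) shows that at most one processor is privileged and that some processor
       is always enabled.  In fact every configuration has an enabled processor, so all executions
       are infinite.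
   (2) Liveness: once every move is an NA move, a processor with a neighbour that never moves
       again can only make finitely many moves; by connectivity all processors then move
       infinitely often, so in a legitimate execution every clock sweeps through every value and
       every processor executes its critical section infinitely often.
   (3) Convergence: every reset (rule RA) is either caused by an earlier reset of a neighbour or
       is one of finitely many root resets; causal chains have length below n, because a clock
       climbing from -n is slowed down by one unit per link of the chain.  Hence there are
       finitely many resets; afterwards the total negative clock mass only decreases, so
       eventually all moves are NA moves and a legitimate configuration is reached. *)

lemma mod_diff_cases:
  fixes a b K :: int
  assumes "0 \<le> a" "a < K" "0 \<le> b" "b < K"
  shows "(a - b) mod K = (if b \<le> a then a - b else a - b + K)"
  using assms by (smt (verit) mod_add_self2 mod_pos_pos_trivial)

lemma dvd_abs_less_eq_0:
  fixes K x :: int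
  assumes "K dvd x" and "\<bar>x\<bar> < K"
  shows "x = 0"
proof (rule ccontr)
  assume "x \<noteq> 0"
  then have "\<bar>K\<bar> \<le> \<bar>x\<bar>" using dvd_imp_le_int assms(1) by blast
  then show False using assms(2) by linarith
qed

lemma dK_le_1_dvd:
  fixes K a b :: int
  assumes "0 < K" and "dK K a b \<le> 1"
  shows "\<exists>e. \<bar>e\<bar> \<le> 1 \<and> K dvd (b - a - e)"
proof (cases "(b - a) mod K \<le> 1")
  case True
  then show ?thesis using assms(1) by (intro exI[of _ "(b - a) mod K"]) auto
next
  case False
  then have le1: "(a - b) mod K \<le> 1" using assms(2) by (simp add: dK_def bar_def)
  have "b - a - - ((a - b) mod K) = - ((a - b) - (a - b) mod K)" by simp
  then have "K dvd (b - a - - ((a - b) mod K))" by (metis dvd_minus_iff dvd_minus_mod)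
  then show ?thesis using le1 assms(1) by (intro exI[of _ "- ((a - b) mod K)"]) auto
qed

lemma le_l_of_dvd:
  fixes K a b e :: int
  assumes "1 < K" and "K dvd (b - a - e)" and "0 \<le> e" and "e \<le> 1"
  shows "le_l K a b"
proof -
  have "(b - a) mod K = e mod K" using assms(2) by (simp add: mod_eq_dvd_iff)
  also have "\<dots> = e" using assms by simp
  finally show ?thesis by (simp add: le_l_def bar_def assms(3,4))
qed

lemma dK_le_1_iff:
  fixes K a b :: int
  assumes "3 \<le> K" "0 \<le> a" "a < K" "0 \<le> b" "b < K"
  shows "dK K a b \<le> 1 \<longleftrightarrow>
    a = b \<or> a = b + 1 \<or> b = a + 1 \<or> (a = 0 \<and> b = K - 1) \<or> (b = 0 \<and> a = K - 1)"
  using assms by (auto simp: dK_def bar_def mod_diff_cases)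

lemma le_l_iff:
  fixes K a b :: int
  assumes "3 \<le> K" "0 \<le> a" "a < K" "0 \<le> b" "b < K"
  shows "le_l K a b \<longleftrightarrow> b = a \<or> b = a + 1 \<or> (a = K - 1 \<and> b = 0)"
  using assms by (auto simp: le_l_def bar_def mod_diff_cases)

lemma clock_pair_step:
  fixes K a b a' b' :: int
  assumes K: "3 \<le> K" and b: "0 \<le> a" "a < K" "0 \<le> b" "b < K"
    and close: "dK K a b \<le> 1"
    and a': "a' = a \<or> (a' = (if a = K - 1 then 0 else a + 1) \<and> le_l K a b)"
    and b': "b' = b \<or> (b' = (if b = K - 1 then 0 else b + 1) \<and> le_l K b a)"
  shows "dK K a' b' \<le> 1 \<and> 0 \<le> a' \<and> a' < K \<and> 0 \<le> b' \<and> b' < K"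
proof -
  have bounds: "0 \<le> a' \<and> a' < K \<and> 0 \<le> b' \<and> b' < K" using a' b' b K by auto
  have "a = b \<or> a = b + 1 \<or> b = a + 1 \<or> (a = 0 \<and> b = K - 1) \<or> (b = 0 \<and> a = K - 1)"
    using close dK_le_1_iff[OF K b] by simp
  moreover have "a' = a \<or> (a' = (if a = K - 1 then 0 else a + 1) \<and> (b = a \<or> b = a + 1 \<or> (a = K - 1 \<and> b = 0)))"
    using a' le_l_iff[OF K b] by blast
  moreover have "b' = b \<or> (b' = (if b = K - 1 then 0 else b + 1) \<and> (a = b \<or> a = b + 1 \<or> (b = K - 1 \<and> a = 0)))"
    using b' le_l_iff[OF K b(3,4,1,2)] by blast
  ultimately have "a' = b' \<or> a' = b' + 1 \<or> b' = a' + 1 \<or> (a' = 0 \<and> b' = K - 1) \<or> (b' = 0 \<and> a' = K - 1)"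
    using K b by (smt (verit))
  then show ?thesis using dK_le_1_iff[OF K] bounds by blast
qed

lemma clock_distance_step:
  fixes K x p :: int
  assumes "3 \<le> K" "0 \<le> x" "x < K" "0 \<le> p" "p < K" and "p \<noteq> x"
  shows "(p - (if x = K - 1 then 0 else x + 1)) mod K = (p - x) mod K - 1 \<and> 0 < (p - x) mod K"
  using assms by (auto simp: mod_diff_cases)

text \<open>While a neighbour's clock is frozen at \<open>c\<close>, an NA move of a clock \<open>y\<close> requires \<open>y \<le>\<^sub>l c\<close>,
  i.e. forward distance 0 or 1 to \<open>c\<close>.  This potential counts the NA moves still possible.\<close>
definition gap_potential :: "int \<Rightarrow> int \<Rightarrow> int \<Rightarrow> nat" where
  "gap_potential K c y = (if (c - y) mod K = 1 then 2 else if (c - y) mod K = 0 then 1 else 0)"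

lemma gap_potential_decreases:
  fixes K x c :: int
  assumes "3 \<le> K" "0 \<le> x" "x < K" "0 \<le> c" "c < K"
    and "c = x \<or> c = x + 1 \<or> (x = K - 1 \<and> c = 0)"
  shows "gap_potential K c (if x = K - 1 then 0 else x + 1) < gap_potential K c x"
  using assms by (auto simp: gap_potential_def mod_diff_cases)

lemma first_crossing:
  fixes f :: "nat \<Rightarrow> 'a::linorder"
  assumes "f a < L" and "L \<le> f b" and "a \<le> b"
  shows "\<exists>i. a \<le> i \<and> i < b \<and> f i < L \<and> L \<le> f (Suc i)"
  using assms
proof (induction b)
  case 0
  then show ?case by auto
next
  case (Suc b)
  show ?case
  proof (cases "L \<le> f b")
    case True
    then have "a \<le> b" using Suc.prems by (cases "a = Suc b") auto
    then show ?thesis using Suc.IH[OF Suc.prems(1) True] by (metis less_Suc_eq)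
  next
    case False
    then show ?thesis using Suc.prems by (intro exI[of _ b]) (auto simp: le_Suc_eq)
  qed
qed

lemma last_holding:
  fixes P :: "nat \<Rightarrow> bool"
  assumes "P a" and "\<not> P b" and "a < b"
  shows "\<exists>i. a \<le> i \<and> i < b \<and> P i \<and> (\<forall>j. i < j \<and> j \<le> b \<longrightarrow> \<not> P j)"
  using assms
proof (induction b)
  case 0
  then show ?case by auto
next
  case (Suc b)
  show ?case
  proof (cases "P b")
    case True
    then show ?thesis using Suc.prems by (intro exI[of _ b]) (auto simp: le_Suc_eq)
  next
    case False
    then have "a < b" using Suc.prems by (metis less_Suc_eq)
    from Suc.IH[OF Suc.prems(1) False this] obtain i where
      "a \<le> i" "i < b" "P i" "\<forall>j. i < j \<and> j \<le> b \<longrightarrow> \<not> P j" by blast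
    then show ?thesis using Suc.prems(2) by (intro exI[of _ i]) (auto simp: le_Suc_eq)
  qed
qed

lemma nonincreasing_from:
  fixes p :: "nat \<Rightarrow> 'a::order"
  assumes "\<And>i. T \<le> i \<Longrightarrow> p (Suc i) \<le> p i" and "T \<le> j" and "j \<le> i"
  shows "p i \<le> p j"
  using lift_Suc_antimono_le[of "\<lambda>k. p (T + k)" "j - T" "i - T"] assms by simp

lemma potential_eventually_no_event:
  fixes p :: "nat \<Rightarrow> nat"
  assumes mono: "\<And>i. T \<le> i \<Longrightarrow> p (Suc i) \<le> p i"
    and dec: "\<And>i. T \<le> i \<Longrightarrow> P i \<Longrightarrow> p (Suc i) < p i"
  shows "\<exists>T'\<ge>T. \<forall>i\<ge>T'. \<not> P i"
proof -
  obtain T' where T': "T \<le> T'" "\<And>i. T \<le> i \<Longrightarrow> p T' \<le> p i"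
    using ex_has_least_nat[of "\<lambda>i. T \<le> i" T p] by auto
  have "\<not> P i" if i: "T' \<le> i" for i
  proof
    assume "P i"
    then have "p (Suc i) < p i" using dec T'(1) i by simp
    moreover have "p i \<le> p T'" using nonincreasing_from[of T p, OF mono T'(1) i] .
    moreover have "p T' \<le> p (Suc i)" using T' i by simp
    ultimately show False by simp
  qed
  then show ?thesis using T'(1) by blast
qed

lemma finite_single_event:
  assumes place: "S \<subseteq> UNIV \<times> {u}"
    and unique: "\<And>t1 t2. (t1, u) \<in> S \<Longrightarrow> (t2, u) \<in> S \<Longrightarrow> t1 < t2 \<Longrightarrow> False"
  shows "finite (S :: (nat \<times> 'b) set)"
proof (cases "S = {}")
  case False
  then obtain x where x: "x \<in> S" by auto
  have "y = x" if "y \<in> S" for y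
  proof -
    obtain t1 t2 where "x = (t1, u)" "y = (t2, u)" using x \<open>y \<in> S\<close> place by blast
    then show ?thesis using unique x \<open>y \<in> S\<close> by (metis linorder_neqE_nat)
  qed
  then have "S \<subseteq> {x}" by blast
  then show ?thesis using finite_subset by blast
qed simp

lemma finite_by_parent_depth:
  assumes parent_in: "\<And>x. x \<in> X \<Longrightarrow> x \<notin> R \<Longrightarrow> p x \<in> X"
    and fibres: "\<And>y. finite {x \<in> X - R. p x = y}"
    and roots: "finite (X \<inter> R)"
    and depth: "\<And>x. x \<in> X \<Longrightarrow> \<exists>k\<le>m. (p ^^ k) x \<in> R"
  shows "finite X"
proof -
  have "finite {x \<in> X. \<exists>k\<le>d. (p ^^ k) x \<in> R}" for d
  proof (induction d)
    case 0
    have "{x \<in> X. \<exists>k\<le>0. (p ^^ k) x \<in> R} = X \<inter> R" by auto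
    then show ?case using roots by simp
  next
    case (Suc d)
    let ?Xd = "{x \<in> X. \<exists>k\<le>d. (p ^^ k) x \<in> R}"
    have "{x \<in> X. \<exists>k\<le>Suc d. (p ^^ k) x \<in> R} \<subseteq> (X \<inter> R) \<union> (\<Union>y\<in>?Xd. {x \<in> X - R. p x = y})"
    proof
      fix x assume x: "x \<in> {x \<in> X. \<exists>k\<le>Suc d. (p ^^ k) x \<in> R}"
      show "x \<in> (X \<inter> R) \<union> (\<Union>y\<in>?Xd. {x \<in> X - R. p x = y})"
      proof (cases "x \<in> R")
        case False
        from x obtain k where k: "k \<le> Suc d" "(p ^^ k) x \<in> R" by auto
        then obtain k' where k': "k = Suc k'" using False by (cases k) auto
        then have "(p ^^ k') (p x) \<in> R" using k(2) by (simp add: funpow_swap1)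
        then have "p x \<in> ?Xd" using parent_in x False k(1) k' by auto
        then show ?thesis using x False by auto
      qed (use x in auto)
    qed
    moreover have "finite ((X \<inter> R) \<union> (\<Union>y\<in>?Xd. {x \<in> X - R. p x = y}))"
      using Suc.IH roots fibres by blast
    ultimately show ?case by (rule finite_subset)
  qed
  moreover have "X \<subseteq> {x \<in> X. \<exists>k\<le>m. (p ^^ k) x \<in> R}" using depth by blast
  ultimately show ?thesis using finite_subset by blast
qed


locale emss_graph =
  fixes V :: "'v set" and E :: "'v \<Rightarrow> 'v \<Rightarrow> bool"
  assumes conn_graph: "is_conn_graph V E"
begin

abbreviation N :: int where "N \<equiv> int (nproc V)"
abbreviation K :: int where "K \<equiv> Kc V E"
abbreviation D :: nat where "D \<equiv> diam V E"

lemma finite_V: "finite V" using conn_graph by (simp add: is_conn_graph_def)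
lemma V_nonempty: "V \<noteq> {}" using conn_graph by (simp add: is_conn_graph_def)
lemma edge_in_V: "E u v \<Longrightarrow> u \<in> V \<and> v \<in> V" using conn_graph by (simp add: is_conn_graph_def)
lemma edge_sym: "E u v \<Longrightarrow> E v u" using conn_graph by (simp add: is_conn_graph_def)
lemma edge_irrefl: "\<not> E u u" using conn_graph by (simp add: is_conn_graph_def)
lemma connected: "u \<in> V \<Longrightarrow> v \<in> V \<Longrightarrow> E\<^sup>*\<^sup>* u v" using conn_graph by (simp add: is_conn_graph_def)

lemma N_ge_1: "1 \<le> N"
  using finite_V V_nonempty by (simp add: nproc_def Suc_le_eq card_gt_0_iff)

lemma N_ge_2_of_edge:
  assumes "E u v" shows "2 \<le> N"
proof -
  have "u \<noteq> v" using edge_irrefl assms by blast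
  have "card {u, v} \<le> card V" using edge_in_V[OF assms] finite_V by (intro card_mono) auto
  then show ?thesis using \<open>u \<noteq> v\<close> by (simp add: nproc_def)
qed

lemma K_eq: "K = (2 * N - 1) * (int D + 1) + 2" by (simp add: Kc_def)

lemma K_ge_3: "3 \<le> K"
proof -
  have "1 * 1 \<le> (2 * N - 1) * (int D + 1)" using N_ge_1 by (intro mult_mono) auto
  then show ?thesis using K_eq by linarith
qed

lemma stab_iff [simp]: "x \<in> stab_set V E \<longleftrightarrow> 0 \<le> x \<and> x < K"
  by (auto simp: stab_set_def)
lemma init_iff [simp]: "x \<in> init_set V \<longleftrightarrow> - N \<le> x \<and> x \<le> 0"
  by (auto simp: init_set_def)
lemma initS_iff [simp]: "x \<in> initS_set V \<longleftrightarrow> - N \<le> x \<and> x \<le> -1"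
  by (auto simp: initS_set_def)
lemma H_iff [simp]: "x \<in> Hset V E \<longleftrightarrow> - N \<le> x \<and> x < K"
  by (auto simp: Hset_def)

lemma phi_neg: "x < 0 \<Longrightarrow> phi V E x = x + 1"
  by (simp add: phi_def)

lemma phi_nonneg: "0 \<le> x \<Longrightarrow> x < K \<Longrightarrow> phi V E x = (if x = K - 1 then 0 else x + 1)"
  using K_ge_3 by (auto simp: phi_def)

lemma phi_in_H: "- N \<le> x \<Longrightarrow> x < K \<Longrightarrow> - N \<le> phi V E x \<and> phi V E x < K"
  using K_ge_3 N_ge_1 by (auto simp: phi_def intro: order_trans[OF _ pos_mod_sign])

lemma correct_iff: "correct V E r v u \<longleftrightarrow> 0 \<le> r v \<and> r v < K \<and> 0 \<le> r u \<and> r u < K \<and>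
   (r v = r u \<or> r v = r u + 1 \<or> r u = r v + 1 \<or> (r v = 0 \<and> r u = K - 1) \<or> (r u = 0 \<and> r v = K - 1))"
  unfolding correct_def using dK_le_1_iff[OF K_ge_3] by auto

lemma correct_sym: "correct V E r v u \<longleftrightarrow> correct V E r u v"
  by (auto simp: correct_iff)

lemma correct_of_tousCorrects: "tousCorrects V E r v \<Longrightarrow> E v u \<Longrightarrow> correct V E r v u"
  by (auto simp: tousCorrects_def vois_def)

lemma moved_by_rule:
  assumes st: "step_did V E r S r'" and vS: "v \<in> S"
  shows "v \<in> V \<and> ((etapeNorm V E r v \<and> r' v = phi V E (r v)) \<or> (etapeConv V E r v \<and> r' v = r v + 1)
          \<or> (reInit V E r v \<and> r' v = - N))"
proof -
  have "v \<in> V" "r' v \<in> action_results V E r v" using st vS by (auto simp: step_did_def)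
  moreover have "etapeConv V E r v \<Longrightarrow> phi V E (r v) = r v + 1"
    by (simp add: etapeConv_def phi_neg)
  ultimately show ?thesis by (auto simp: action_results_def split: if_splits)
qed

lemma unmoved: "step_did V E r S r' \<Longrightarrow> v \<notin> S \<Longrightarrow> r' v = r v"
  by (simp add: step_did_def)

lemma config_bounds: "is_config V E r \<Longrightarrow> v \<in> V \<Longrightarrow> - N \<le> r v \<and> r v < K"
  by (auto simp: is_config_def)

lemma step_preserves_config:
  assumes c: "is_config V E r" and st: "step_did V E r S r'"
  shows "is_config V E r'"
  unfolding is_config_def
proof
  fix v assume v: "v \<in> V"
  have b: "- N \<le> r v" "r v < K" using config_bounds[OF c v] by auto
  show "r' v \<in> Hset V E"
  proof (cases "v \<in> S")
    case True
    then show ?thesis using moved_by_rule[OF st True] b phi_in_H[of "r v"] K_ge_3 N_ge_1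
      by (auto simp: etapeConv_def)
  next
    case False
    then show ?thesis using unmoved[OF st False] b by simp
  qed
qed

lemma rising_move:
  assumes c: "is_config V E r" and st: "step_did V E r S r'" and v: "v \<in> V"
    and L: "r v < L" "L \<le> r' v" "L \<le> 1"
  shows "v \<in> S \<and> r' v = r v + 1 \<and> (\<forall>u. E v u \<longrightarrow> r v \<le> r u \<and> (r v < 0 \<longrightarrow> r u \<le> 0))"
proof -
  have vS: "v \<in> S" using unmoved[OF st] L by force
  have b: "- N \<le> r v" "r v < K" using config_bounds[OF c v] by auto
  consider (NA) "etapeNorm V E r v" "r' v = phi V E (r v)"
    | (CA) "etapeConv V E r v" "r' v = r v + 1"
    | (RA) "reInit V E r v" "r' v = - N"
    using moved_by_rule[OF st vS] by blast
  then show ?thesis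
  proof cases
    case NA
    show ?thesis
    proof (cases "\<exists>u. E v u")
      case True
      then obtain u where "E v u" by auto
      then have "0 \<le> r v" using NA by (auto simp: etapeNorm_def correct_def dest: correct_of_tousCorrects)
      then have "r v = 0" using L NA phi_nonneg[of "r v"] b by (auto split: if_splits)
      moreover have "\<forall>u. E v u \<longrightarrow> 0 \<le> r u"
        using NA by (auto simp: etapeNorm_def correct_def dest: correct_of_tousCorrects)
      ultimately show ?thesis using NA vS phi_nonneg[of 0] K_ge_3 by auto
    next
      case False
      then show ?thesis using NA vS L phi_nonneg[of "r v"] phi_neg[of "r v"] b
        by (cases "r v < 0") auto
    qed
  next
    case CA
    then show ?thesis using vS by (auto simp: etapeConv_def vois_def)
  next
    case RA
    then show ?thesis using b L by auto
  qed
qed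

lemma falling_move:
  assumes c: "is_config V E r" and st: "step_did V E r S r'" and L: "0 \<le> r v" "r' v < 0"
  shows "v \<in> S \<and> reInit V E r v \<and> r' v = - N"
proof -
  have vS: "v \<in> S" using unmoved[OF st] L by force
  then have "r v < K" using moved_by_rule[OF st] config_bounds[OF c] by blast
  with moved_by_rule[OF st vS] L phi_nonneg[of "r v"] show ?thesis
    by (auto simp: etapeConv_def vS split: if_splits)
qed

lemma nonneg_move_is_NA:
  assumes st: "step_did V E r S r'" and x: "x \<in> S" and nn: "0 \<le> r x" "0 \<le> r' x"
  shows "etapeNorm V E r x \<and> r' x = phi V E (r x)"
  using moved_by_rule[OF st x] nn N_ge_1 by (auto simp: etapeConv_def)

lemma correct_preserved:
  assumes st: "step_did V E r S r'" and e: "E u w"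
    and cr: "correct V E r u w" and nn: "0 \<le> r' u" "0 \<le> r' w"
  shows "correct V E r' u w"
proof -
  have b: "0 \<le> r u" "r u < K" "0 \<le> r w" "r w < K" using cr by (auto simp: correct_def)
  have move: "r' x = r x \<or> (r' x = phi V E (r x) \<and> le_l K (r x) (r y))"
    if "(x = u \<and> y = w) \<or> (x = w \<and> y = u)" for x y
  proof (cases "x \<in> S")
    case True
    have "0 \<le> r x" "0 \<le> r' x" using that b nn by auto
    from nonneg_move_is_NA[OF st True this] that e edge_sym show ?thesis
      by (auto simp: etapeNorm_def vois_def)
  next
    case False
    then show ?thesis using unmoved[OF st] by auto
  qed
  have "r' u = r u \<or> (r' u = (if r u = K - 1 then 0 else r u + 1) \<and> le_l K (r u) (r w))"
    using move[of u w] phi_nonneg b by auto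
  moreover have "r' w = r w \<or> (r' w = (if r w = K - 1 then 0 else r w + 1) \<and> le_l K (r w) (r u))"
    using move[of w u] phi_nonneg b by auto
  moreover have "dK K (r u) (r w) \<le> 1" using cr by (simp add: correct_def)
  ultimately have "dK K (r' u) (r' w) \<le> 1 \<and> 0 \<le> r' u \<and> r' u < K \<and> 0 \<le> r' w \<and> r' w < K"
    using clock_pair_step[OF K_ge_3 b] by blast
  then show ?thesis by (simp add: correct_def)
qed

section \<open>Legitimate configurations: closure and safety\<close>

definition legit :: "('v \<Rightarrow> int) \<Rightarrow> bool" where
  "legit r \<longleftrightarrow> (\<forall>v\<in>V. 0 \<le> r v \<and> r v < K \<and> tousCorrects V E r v)"

lemma legit_config: "legit r \<Longrightarrow> is_config V E r"
  using N_ge_1 by (auto simp: legit_def is_config_def)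

lemma legit_move_is_NA:
  assumes lg: "legit r" and st: "step_did V E r S r'" and v: "v \<in> S"
  shows "0 \<le> r v \<and> etapeNorm V E r v \<and> r' v = phi V E (r v)"
proof -
  have "v \<in> V" using moved_by_rule[OF st v] by simp
  then have "0 \<le> r v" "tousCorrects V E r v" using lg by (auto simp: legit_def)
  then show ?thesis using moved_by_rule[OF st v] by (auto simp: reInit_def etapeConv_def)
qed

lemma legit_step:
  assumes lg: "legit r" and st: "step_did V E r S r'"
  shows "legit r'"
proof -
  have bounds: "0 \<le> r' x \<and> r' x < K" if x: "x \<in> V" for x
  proof -
    have b: "0 \<le> r x" "r x < K" using lg x by (auto simp: legit_def)
    have "r' x = r x \<or> r' x = phi V E (r x)"
      using legit_move_is_NA[OF lg st] unmoved[OF st] by blast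
    then show ?thesis using phi_nonneg[OF b] K_ge_3 b by auto
  qed
  have "correct V E r' v u" if v: "v \<in> V" and e: "E v u" for v u
  proof -
    have "correct V E r v u" using lg v e by (auto simp: legit_def dest: correct_of_tousCorrects)
    then show ?thesis using correct_preserved[OF st e] bounds edge_in_V[OF e] by blast
  qed
  then show ?thesis using bounds by (auto simp: legit_def tousCorrects_def vois_def)
qed

lemma correct_shift:
  assumes "correct V E r a b"
  shows "\<exists>e. \<bar>e\<bar> \<le> 1 \<and> K dvd (r b - r a - e)"
  using dK_le_1_dvd[of K "r a" "r b"] assms K_ge_3 by (simp add: correct_def)

lemma path_shift:
  assumes cor: "\<forall>v\<in>V. tousCorrects V E r v" and a: "a \<in> V"
  shows "(E ^^ k) a b \<Longrightarrow> \<exists>d. \<bar>d\<bar> \<le> int k \<and> K dvd (r b - r a - d)"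
proof (induction k arbitrary: b)
  case 0
  then show ?case by (auto elim: relpowp_0_E intro: exI[of _ 0])
next
  case (Suc k)
  from Suc.prems obtain c where c: "(E ^^ k) a c" "E c b" by (auto elim: relpowp_Suc_E)
  obtain d where d: "\<bar>d\<bar> \<le> int k" "K dvd (r c - r a - d)" using Suc.IH[OF c(1)] by auto
  have "correct V E r c b" using cor edge_in_V[OF c(2)] c(2) by (auto dest: correct_of_tousCorrects)
  then obtain e where e: "\<bar>e\<bar> \<le> 1" "K dvd (r b - r c - e)" using correct_shift by blast
  have "K dvd (r c - r a - d) + (r b - r c - e)" using d(2) e(2) by (rule dvd_add)
  moreover have "(r c - r a - d) + (r b - r c - e) = r b - r a - (d + e)" by simp
  ultimately show ?case using d(1) e(1) by (intro exI[of _ "d + e"]) auto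
qed

lemma gdist_path:
  assumes "a \<in> V" "b \<in> V" shows "(E ^^ gdist E a b) a b"
proof -
  obtain k where "(E ^^ k) a b" using rtranclp_imp_relpowp[OF connected[OF assms]] ..
  then show ?thesis unfolding gdist_def by (rule LeastI)
qed

lemma gdist_le_diam:
  assumes "a \<in> V" "b \<in> V" shows "gdist E a b \<le> D"
proof -
  have "finite {gdist E u v | u v. u \<in> V \<and> v \<in> V}" using finite_V by (intro finite_image_set2) auto
  moreover have "gdist E a b \<in> {gdist E u v | u v. u \<in> V \<and> v \<in> V}" using assms by blast
  ultimately show ?thesis unfolding diam_def by (rule Max_ge)
qed

lemma clock_shift:
  assumes "\<forall>v\<in>V. tousCorrects V E r v" "a \<in> V" "b \<in> V"
  shows "\<exists>d. \<bar>d\<bar> \<le> int D \<and> K dvd (r b - r a - d)"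
  using path_shift[OF assms(1,2) gdist_path[OF assms(2,3)]] gdist_le_diam[OF assms(2,3)] by force

text \<open>Lift clocks to integer offsets \<open>s\<close> in \<open>[-D, D]\<close> relative to a reference clock \<open>r0\<close>.
  Across an edge the offsets differ exactly by the clock shift (as \<open>2D + 1 < K\<close>), so a
  processor whose offset does not exceed its neighbour's precedes it in the order \<open>\<le>\<^sub>l\<close>.\<close>
lemma lifted_offsets_le_l:
  assumes cor: "\<forall>v\<in>V. tousCorrects V E r v" and K_big: "2 * int D + 1 < K" and e: "E v u"
    and sv: "\<bar>s v\<bar> \<le> int D" "K dvd (r v - r0 - s v)"
    and su: "\<bar>s u\<bar> \<le> int D" "K dvd (r u - r0 - s u)"
    and le: "s v \<le> s u"
  shows "le_l K (r v) (r u)"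
proof -
  have "correct V E r v u" using cor edge_in_V[OF e] e by (auto dest: correct_of_tousCorrects)
  then obtain c where c: "\<bar>c\<bar> \<le> 1" "K dvd (r u - r v - c)" using correct_shift by blast
  have "K dvd (r u - r v - c) - (r u - r0 - s u) + (r v - r0 - s v)"
    using dvd_add[OF dvd_diff[OF c(2) su(2)] sv(2)] .
  moreover have "(r u - r v - c) - (r u - r0 - s u) + (r v - r0 - s v) = s u - s v - c" by simp
  moreover have "\<bar>s u - s v - c\<bar> < K" using sv(1) su(1) c(1) K_big by linarith
  ultimately have "s u - s v - c = 0" using dvd_abs_less_eq_0 by metis
  then have "0 \<le> c" using le by linarith
  then show ?thesis using le_l_of_dvd[OF _ c(2)] K_ge_3 c(1) by auto
qed

text \<open>If all processors are correct, some processor can execute NA: lift every clock to an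
  integer offset in \<open>[-D, D]\<close> from a fixed processor; neighbouring offsets then differ by the
  clock shift across the edge (as \<open>2D + 1 < K\<close>), so a processor of minimal offset precedes all
  its neighbours.\<close>
lemma all_correct_NA_enabled:
  assumes cor: "\<forall>v\<in>V. tousCorrects V E r v"
  shows "\<exists>v\<in>V. etapeNorm V E r v"
proof (cases "\<exists>v\<in>V. \<forall>u. \<not> E v u")
  case True
  then show ?thesis by (auto simp: etapeNorm_def tousCorrects_def vois_def)
next
  case False
  obtain v0 where v0: "v0 \<in> V" using V_nonempty by auto
  then obtain u0 where "E v0 u0" using False by auto
  then have N2: "2 \<le> N" by (rule N_ge_2_of_edge)
  have K_big: "2 * int D + 1 < K"
  proof -
    have "3 * (int D + 1) \<le> (2 * N - 1) * (int D + 1)" using N2 by (intro mult_right_mono) auto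
    then have "3 * int D + 3 \<le> (2 * N - 1) * (int D + 1)" by simp
    then show ?thesis using K_eq by linarith
  qed
  define s where "s v = (SOME d. \<bar>d\<bar> \<le> int D \<and> K dvd (r v - r v0 - d))" for v
  have s: "\<bar>s v\<bar> \<le> int D \<and> K dvd (r v - r v0 - s v)" if "v \<in> V" for v
    unfolding s_def using clock_shift[OF cor v0 that] by (rule someI_ex)
  define v where "v = arg_min_on s V"
  have v: "v \<in> V" "\<And>y. y \<in> V \<Longrightarrow> s v \<le> s y"
    using arg_min_if_finite(1)[OF finite_V V_nonempty] arg_min_least[OF finite_V V_nonempty]
    by (auto simp: v_def)
  have "le_l K (r v) (r u)" if e: "E v u" for u
  proof -
    have u: "u \<in> V" using edge_in_V[OF e] by simp
    show ?thesis using lifted_offsets_le_l[OF cor K_big e] s[OF v(1)] s[OF u] v(2)[OF u] by blast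
  qed
  then have "etapeNorm V E r v" using cor v(1) by (simp add: etapeNorm_def vois_def)
  then show ?thesis using v(1) by blast
qed

lemma K_eq_expanded: "K = 2 * N * int D + 2 * N - int D + 1"
  by (simp add: K_eq algebra_simps)

lemma privilege_value_bounds:
  assumes bij: "bij_betw ident V {0..<nproc V}" and v: "v \<in> V"
  shows "0 \<le> 2 * N + 2 * int D * int (ident v) \<and> 2 * N + 2 * int D * int (ident v) < K"
proof -
  have "ident v < nproc V" using bij v by (auto simp: bij_betw_def)
  then have "int (ident v) \<le> N - 1" by simp
  then have "2 * int D * int (ident v) \<le> 2 * int D * (N - 1)" by (intro mult_left_mono) auto
  moreover have "2 * int D * (N - 1) = 2 * N * int D - 2 * int D" by (simp add: algebra_simps)
  moreover have "0 \<le> 2 * int D * int (ident v)" by simp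
  ultimately show ?thesis using K_eq_expanded N_ge_1 by linarith
qed

text \<open>Safety: privileged values of distinct processors differ by a nonzero multiple of \<open>2D\<close>
  of absolute value at most \<open>2D(n-1)\<close>, while legitimate clocks differ by at most \<open>D\<close> modulo \<open>K\<close>.\<close>
lemma legit_safety:
  assumes lg: "legit r" and bij: "bij_betw ident V {0..<nproc V}" and uv: "u \<in> V" "v \<in> V"
    and pu: "privilege V E ident r u" and pv: "privilege V E ident r v"
  shows "u = v"
proof (rule ccontr)
  assume ne: "u \<noteq> v"
  have "gdist E u v \<noteq> 0" using gdist_path[OF uv] ne by (metis relpowp_0_E)
  then have D1: "1 \<le> int D" using gdist_le_diam[OF uv] by linarith
  have cor: "\<forall>v\<in>V. tousCorrects V E r v" using lg by (simp add: legit_def)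
  obtain d where d: "\<bar>d\<bar> \<le> int D" "K dvd (r v - r u - d)" using clock_shift[OF cor uv] by auto
  define k where "k = int (ident v) - int (ident u)"
  have k0: "k \<noteq> 0" using bij uv ne by (auto simp: k_def bij_betw_def inj_on_def)
  have "ident v < nproc V" "ident u < nproc V" using bij uv by (auto simp: bij_betw_def)
  then have kb: "\<bar>k\<bar> \<le> N - 1" by (auto simp: k_def)
  have rvu: "r v - r u = 2 * int D * k" using pu pv by (simp add: privilege_def k_def algebra_simps)
  have upper: "2 * int D * \<bar>k\<bar> \<le> 2 * int D * (N - 1)" using kb by (intro mult_left_mono) auto
  have lower: "2 * int D * 1 \<le> 2 * int D * \<bar>k\<bar>" using k0 by (intro mult_left_mono) auto
  have abs_gap: "\<bar>2 * int D * k\<bar> = 2 * int D * \<bar>k\<bar>" by (simp add: abs_mult)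
  have expand: "2 * int D * (N - 1) = 2 * N * int D - 2 * int D" by (simp add: algebra_simps)
  have "K dvd (2 * int D * k - d)" using d(2) rvu by simp
  moreover have "\<bar>2 * int D * k - d\<bar> < K"
    using upper abs_gap expand d(1) K_eq_expanded N_ge_1 by linarith
  ultimately have "2 * int D * k - d = 0" by (rule dvd_abs_less_eq_0)
  then show False using lower abs_gap d(1) D1 by linarith
qed

text \<open>If some processor is incorrect, some processor is enabled: either a positive incorrect
  processor can reset, or a minimal nonpositive clock can execute CA.\<close>
lemma incorrect_enabled:
  assumes c: "is_config V E r" and x: "x \<in> V" "\<not> tousCorrects V E r x"
  shows "\<exists>v\<in>V. enabled V E r v"
proof (rule ccontr)
  assume ne: "\<not> (\<exists>v\<in>V. enabled V E r v)"
  have nonpos: "r y \<le> 0" if "y \<in> V" "\<not> tousCorrects V E r y" for y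
    using ne that config_bounds[OF c that(1)] by (auto simp: enabled_def reInit_def)
  define I where "I = {v\<in>V. r v \<le> 0}"
  have I: "finite I" "I \<noteq> {}" using finite_V x nonpos[OF x] by (auto simp: I_def)
  define v where "v = arg_min_on r I"
  have v: "v \<in> V" "r v \<le> 0" "\<And>y. y \<in> I \<Longrightarrow> r v \<le> r y"
    using arg_min_if_finite(1)[OF I] arg_min_least[OF I] by (auto simp: v_def I_def)
  show False
  proof (cases "r v < 0")
    case True
    have "etapeConv V E r v" unfolding etapeConv_def
    proof (intro conjI ballI)
      show "r v \<in> initS_set V" using True config_bounds[OF c v(1)] by auto
      fix u assume "u \<in> vois E v"
      then have e: "E v u" by (simp add: vois_def)
      have uV: "u \<in> V" using edge_in_V[OF e] by simp
      have "\<not> correct V E r u v" using True by (auto simp: correct_def)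
      then have "r u \<le> 0" using nonpos uV edge_sym[OF e] by (blast dest: correct_of_tousCorrects)
      then show "r u \<in> init_set V" "r v \<le> r u" using v(3) config_bounds[OF c uV] uV
        by (auto simp: I_def)
    qed
    then show False using ne v(1) by (auto simp: enabled_def)
  next
    case False
    then have allnn: "\<forall>y\<in>V. 0 \<le> r y" using v by (force simp: I_def)
    obtain u where u: "E x u" "\<not> correct V E r x u" using x(2) by (auto simp: tousCorrects_def vois_def)
    have uV: "u \<in> V" using edge_in_V[OF u(1)] by simp
    have "r x = 0" using nonpos[OF x] allnn x(1) by auto
    then have "0 < r u" using u(2) allnn uV config_bounds[OF c uV] K_ge_3 by (auto simp: correct_iff)
    moreover have "\<not> tousCorrects V E r u" using u correct_sym edge_sym correct_of_tousCorrects by blast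
    ultimately show False using ne uV by (auto simp: enabled_def reInit_def)
  qed
qed

lemma no_deadlock:
  assumes "is_config V E r" shows "\<exists>v\<in>V. enabled V E r v"
proof (cases "\<forall>v\<in>V. tousCorrects V E r v")
  case True
  then show ?thesis using all_correct_NA_enabled by (auto simp: enabled_def)
next
  case False
  then show ?thesis using incorrect_enabled[OF assms] by blast
qed

lemma single_step_exists:
  assumes "v \<in> V" "enabled V E r v"
  shows "step_did V E r {v} (r(v := (if reInit V E r v then - N else phi V E (r v))))"
  using assms by (auto simp: step_did_def action_results_def enabled_def reInit_def etapeNorm_def)

lemma execution_infinite:
  assumes c: "is_config V E r0" and ex: "is_exec_did V E r0 \<sigma> A len"
  shows "len = \<infinity>"
proof (rule ccontr)
  assume "len \<noteq> \<infinity>"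
  then obtain k where k: "len = enat k" by (cases len) auto
  have "is_config V E (\<sigma> i)" if "i \<le> k" for i
    using that
  proof (induction i)
    case 0
    then show ?case using ex c by (simp add: is_exec_did_def)
  next
    case (Suc i)
    then have "step_did V E (\<sigma> i) (A i) (\<sigma> (Suc i))" using ex k by (simp add: is_exec_did_def)
    then show ?case using Suc step_preserves_config by simp
  qed
  then obtain v where "v \<in> V" "enabled V E (\<sigma> k) v" using no_deadlock by blast
  from single_step_exists[OF this] show False using ex k by (auto simp: is_exec_did_def)
qed

end


locale emss_exec = emss_graph V E for V :: "'v set" and E +
  fixes \<sigma> :: "nat \<Rightarrow> 'v \<Rightarrow> int" and A :: "nat \<Rightarrow> 'v set"
  assumes steps: "\<And>i. step_did V E (\<sigma> i) (A i) (\<sigma> (Suc i))"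
    and config_0: "is_config V E (\<sigma> 0)"
begin

lemma config_at: "is_config V E (\<sigma> i)"
  by (induction i) (use config_0 step_preserves_config steps in auto)

lemma A_nonempty: "A i \<noteq> {}" using steps[of i] by (simp add: step_did_def)
lemma A_in_V: "A i \<subseteq> V" using steps[of i] by (auto simp: step_did_def)
lemma unmoved_at: "v \<notin> A i \<Longrightarrow> \<sigma> (Suc i) v = \<sigma> i v" using unmoved[OF steps] .

definition moves_finitely :: "'v \<Rightarrow> bool" where
  "moves_finitely v \<longleftrightarrow> (\<exists>T. \<forall>i\<ge>T. v \<notin> A i)"

lemma frozen_value:
  assumes "moves_finitely w" shows "\<exists>T c. \<forall>i\<ge>T. \<sigma> i w = c"
proof -
  obtain T where T: "\<forall>i\<ge>T. w \<notin> A i" using assms by (auto simp: moves_finitely_def)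
  have "\<sigma> i w = \<sigma> T w" if "T \<le> i" for i
    using that by (induction i rule: dec_induct) (use T unmoved_at in auto)
  then show ?thesis by blast
qed

definition normal_from :: "nat \<Rightarrow> bool" where
  "normal_from T \<longleftrightarrow> (\<forall>i\<ge>T. \<forall>v\<in>A i.
     0 \<le> \<sigma> i v \<and> etapeNorm V E (\<sigma> i) v \<and> \<sigma> (Suc i) v = phi V E (\<sigma> i v))"

section \<open>Liveness in the normal phase\<close>

text \<open>In the normal phase a processor next to a processor that eventually stops moving also
  stops: each of its NA moves decreases its \<open>gap_potential\<close> towards the frozen clock.\<close>
lemma frozen_neighbour:
  assumes na: "normal_from T0" and e: "E u w" and fw: "moves_finitely w"
  shows "moves_finitely u"
proof -
  obtain T1 c where T1: "\<And>i. T1 \<le> i \<Longrightarrow> \<sigma> i w = c" using frozen_value[OF fw] by auto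
  define T where "T = max T0 T1"
  define p where "p i = gap_potential K c (\<sigma> i u)" for i
  have dec: "p (Suc i) < p i" if i: "T \<le> i" "u \<in> A i" for i
  proof -
    have en: "etapeNorm V E (\<sigma> i) u" "\<sigma> (Suc i) u = phi V E (\<sigma> i u)"
      using na i by (auto simp: normal_from_def T_def)
    have cw: "\<sigma> i w = c" using T1 i by (auto simp: T_def)
    have "correct V E (\<sigma> i) u w" using en e by (auto simp: etapeNorm_def dest: correct_of_tousCorrects)
    then have b: "0 \<le> \<sigma> i u" "\<sigma> i u < K" "0 \<le> c" "c < K" using cw by (auto simp: correct_def)
    have "le_l K (\<sigma> i u) c" using en e cw by (auto simp: etapeNorm_def vois_def)
    then have l: "c = \<sigma> i u \<or> c = \<sigma> i u + 1 \<or> (\<sigma> i u = K - 1 \<and> c = 0)"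
      using le_l_iff[OF K_ge_3 b] by auto
    have "\<sigma> (Suc i) u = (if \<sigma> i u = K - 1 then 0 else \<sigma> i u + 1)" using en phi_nonneg b by auto
    then show ?thesis using gap_potential_decreases[OF K_ge_3 b l] by (simp add: p_def)
  qed
  have mono: "p (Suc i) \<le> p i" if "T \<le> i" for i
    using dec[OF that] unmoved_at[of u i] by (cases "u \<in> A i") (auto simp: p_def)
  obtain T' where "\<forall>i\<ge>T'. u \<notin> A i"
    using potential_eventually_no_event[of T p "\<lambda>i. u \<in> A i", OF mono dec] by blast
  then show ?thesis by (auto simp: moves_finitely_def)
qed

text \<open>By connectivity, in the normal phase every processor moves infinitely often (some
  processor moves at every step).\<close>
lemma normal_phase_all_move:
  assumes na: "normal_from T0" and v: "v \<in> V"
  shows "\<not> moves_finitely v"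
proof
  assume f: "moves_finitely v"
  have "moves_finitely y" if "E\<^sup>*\<^sup>* v y" for y
    using that
  proof (induction rule: rtranclp_induct)
    case base
    then show ?case using f .
  next
    case (step y z)
    then show ?case using frozen_neighbour[OF na edge_sym[OF step(2)]] by auto
  qed
  then have "\<forall>y\<in>V. moves_finitely y" using connected v by blast
  then have "\<forall>y\<in>V. \<exists>T. \<forall>i\<ge>T. y \<notin> A i" by (simp add: moves_finitely_def)
  then have "\<exists>Tf. \<forall>y\<in>V. \<forall>i\<ge>Tf y. y \<notin> A i" by (rule bchoice)
  then obtain Tf where Tf: "\<forall>y\<in>V. \<forall>i\<ge>Tf y. y \<notin> A i" ..
  define T where "T = Max (Tf ` V)"
  have "y \<notin> A T" if "y \<in> V" for y
  proof -
    have "Tf y \<le> T" using that finite_V by (simp add: T_def)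
    then show ?thesis using Tf that by blast
  qed
  then show False using A_nonempty[of T] A_in_V[of T] by auto
qed

lemma normal_step_nonneg:
  assumes na: "normal_from T" and i: "T \<le> i" and v: "v \<in> V" and nn: "0 \<le> \<sigma> i v"
  shows "0 \<le> \<sigma> (Suc i) v"
proof (cases "v \<in> A i")
  case True
  then have "\<sigma> (Suc i) v = phi V E (\<sigma> i v)" using na i by (auto simp: normal_from_def)
  then show ?thesis using phi_nonneg[of "\<sigma> i v"] config_bounds[OF config_at v] nn by auto
next
  case False
  then show ?thesis using unmoved_at nn by simp
qed

lemma normal_nonneg_persists:
  assumes na: "normal_from T" and "T \<le> i" "i \<le> j" and v: "v \<in> V" and nn: "0 \<le> \<sigma> i v"
  shows "0 \<le> \<sigma> j v"
  using assms(3)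
proof (induction j rule: dec_induct)
  case base
  then show ?case using nn .
next
  case (step m)
  then show ?case using normal_step_nonneg[OF na _ v] assms(2) by simp
qed

lemma normal_correct_persists:
  assumes na: "normal_from T" and "T \<le> i" "i \<le> j" and e: "E v u"
    and cr: "correct V E (\<sigma> i) v u"
  shows "correct V E (\<sigma> j) v u"
  using assms(3)
proof (induction j rule: dec_induct)
  case base
  then show ?case using cr .
next
  case (step m)
  have "0 \<le> \<sigma> (Suc m) v" "0 \<le> \<sigma> (Suc m) u"
    using step.IH normal_step_nonneg[OF na] assms(2) step.hyps edge_in_V[OF e]
    by (auto simp: correct_def)
  then show ?case using correct_preserved[OF steps e step.IH] by simp
qed

text \<open>Once every processor has made a normal move, the configuration is legitimate.\<close>
lemma normal_phase_reaches_legit: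
  assumes na: "normal_from T"
  shows "\<exists>t. legit (\<sigma> t)"
proof -
  have "\<forall>v\<in>V. \<exists>i. T \<le> i \<and> v \<in> A i"
    using normal_phase_all_move[OF na] by (auto simp: moves_finitely_def)
  then have "\<exists>mv. \<forall>v\<in>V. T \<le> mv v \<and> v \<in> A (mv v)" by (rule bchoice)
  then obtain mv where mv: "\<forall>v\<in>V. T \<le> mv v \<and> v \<in> A (mv v)" ..
  define t where "t = Max (mv ` V)"
  have "0 \<le> \<sigma> t v \<and> \<sigma> t v < K \<and> tousCorrects V E (\<sigma> t) v" if v: "v \<in> V" for v
  proof -
    have le: "T \<le> mv v" "mv v \<le> t" using mv v finite_V by (auto simp: t_def)
    have en: "0 \<le> \<sigma> (mv v) v" "etapeNorm V E (\<sigma> (mv v)) v"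
      using na mv v by (auto simp: normal_from_def)
    have "correct V E (\<sigma> t) v u" if "E v u" for u
      using normal_correct_persists[OF na le that] en(2) that
      by (auto simp: etapeNorm_def dest: correct_of_tousCorrects)
    then show ?thesis using normal_nonneg_persists[OF na le v en(1)] config_bounds[OF config_at v]
      by (auto simp: tousCorrects_def vois_def)
  qed
  then show ?thesis by (auto simp: legit_def)
qed

lemma legit_at: "legit (\<sigma> 0) \<Longrightarrow> legit (\<sigma> i)"
  by (induction i) (use legit_step steps in auto)

lemma legit_normal: "legit (\<sigma> 0) \<Longrightarrow> normal_from 0"
  using legit_move_is_NA[OF legit_at steps] by (auto simp: normal_from_def)

lemma next_move:
  assumes "\<not> moves_finitely v"
  shows "\<exists>j\<ge>t. v \<in> A j \<and> \<sigma> j v = \<sigma> t v"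
proof -
  have ex: "\<exists>j. t \<le> j \<and> v \<in> A j" using assms by (auto simp: moves_finitely_def)
  define j where "j = (LEAST j. t \<le> j \<and> v \<in> A j)"
  have j: "t \<le> j" "v \<in> A j" using LeastI_ex[OF ex] by (auto simp: j_def)
  have idle: "v \<notin> A k" if "t \<le> k" "k < j" for k
    using not_less_Least[of k "\<lambda>j. t \<le> j \<and> v \<in> A j"] that by (auto simp: j_def)
  have "\<sigma> k v = \<sigma> t v" if "t \<le> k" "k \<le> j" for k
    using that
  proof (induction k rule: dec_induct)
    case base
    then show ?case by simp
  next
    case (step m)
    then show ?case using idle[of m] unmoved_at[of v m] by simp
  qed
  then have "\<sigma> j v = \<sigma> t v" using j(1) by blast
  then show ?thesis using j by blast
qed

text \<open>In a legitimate execution each processor advances its clock by one at every move and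
  moves infinitely often, so it reaches every value of \<open>stab\<close> at some later move.\<close>
lemma legit_reaches_value:
  assumes lg: "legit (\<sigma> 0)" and v: "v \<in> V" and p: "0 \<le> p" "p < K"
  shows "\<exists>i\<ge>t. v \<in> A i \<and> \<sigma> i v = p"
proof -
  have moving: "\<not> moves_finitely v" using normal_phase_all_move[OF legit_normal[OF lg] v] .
  have "\<forall>t. nat ((p - \<sigma> t v) mod K) = m \<longrightarrow> (\<exists>i\<ge>t. v \<in> A i \<and> \<sigma> i v = p)" for m
  proof (induction m rule: less_induct)
    case (less m)
    show ?case
    proof (intro allI impI)
      fix t assume m: "nat ((p - \<sigma> t v) mod K) = m"
      obtain j where j: "t \<le> j" "v \<in> A j" "\<sigma> j v = \<sigma> t v" using next_move[OF moving] by blast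
      have b: "0 \<le> \<sigma> j v" "\<sigma> j v < K" using legit_at[OF lg] v by (auto simp: legit_def)
      show "\<exists>i\<ge>t. v \<in> A i \<and> \<sigma> i v = p"
      proof (cases "\<sigma> j v = p")
        case True
        then show ?thesis using j by auto
      next
        case False
        have "\<sigma> (Suc j) v = (if \<sigma> j v = K - 1 then 0 else \<sigma> j v + 1)"
          using legit_normal[OF lg] j(2) phi_nonneg b by (auto simp: normal_from_def)
        then have "nat ((p - \<sigma> (Suc j) v) mod K) < m"
          using clock_distance_step[OF K_ge_3 b p False[symmetric]] m j(3) by auto
        then obtain i where "Suc j \<le> i" "v \<in> A i" "\<sigma> i v = p" using less.IH by blast
        then show ?thesis using j(1) by (intro exI[of _ i]) auto
      qed
    qed
  qed
  then show ?thesis by blast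
qed

lemma legit_spec:
  assumes lg: "legit (\<sigma> 0)" and bij: "bij_betw ident V {0..<nproc V}"
  shows "spec_EM V E ident \<sigma> A \<infinity>"
  unfolding spec_EM_def
proof (intro conjI allI impI ballI)
  fix i u v assume "u \<in> V" "v \<in> V" "privilege V E ident (\<sigma> i) u \<and> privilege V E ident (\<sigma> i) v"
  then show "u = v" using legit_safety[OF legit_at[OF lg] bij] by auto
next
  fix v assume v: "v \<in> V"
  define p where "p = 2 * N + 2 * int D * int (ident v)"
  have pb: "0 \<le> p" "p < K" using privilege_value_bounds[OF bij v] by (auto simp: p_def)
  have "\<forall>t. \<exists>i\<ge>t. i \<in> {i. enat i < \<infinity> \<and> v \<in> A i \<and> privilege V E ident (\<sigma> i) v}"
    using legit_reaches_value[OF lg v pb] by (auto simp: privilege_def p_def)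
  then show "infinite {i. enat i < \<infinity> \<and> v \<in> A i \<and> privilege V E ident (\<sigma> i) v}"
    using infinite_nat_iff_unbounded_le by blast
qed

end


section \<open>Bad edges are never created\<close>

context emss_graph
begin

definition bad :: "('v \<Rightarrow> int) \<Rightarrow> 'v \<Rightarrow> 'v \<Rightarrow> bool" where
  "bad r u w \<longleftrightarrow> 0 \<le> r u \<and> 0 \<le> r w \<and> \<not> correct V E r u w"

lemma zero_beside_negative_stays:
  assumes st: "step_did V E r S r'" and y: "r y = 0" and e: "E y x" "r x < 0"
  shows "r' y = 0"
proof (cases "y \<in> S")
  case True
  from moved_by_rule[OF st True] y e show ?thesis
    by (auto simp: reInit_def etapeConv_def etapeNorm_def correct_def dest: correct_of_tousCorrects)
next
  case False
  then show ?thesis using unmoved[OF st False] y by simp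
qed

text \<open>A negative clock becoming nonnegative becomes \<open>0\<close>, and then a nonnegative neighbour is
  also \<open>0\<close>: it was at least \<open>-1\<close> and at most \<open>0\<close> before the step.\<close>
lemma rise_beside_edge:
  assumes c: "is_config V E r" and st: "step_did V E r S r'" and e: "E x y"
    and neg: "r x < 0" and nn: "0 \<le> r' x" "0 \<le> r' y"
  shows "r' x = 0 \<and> r' y = 0"
proof -
  have xy: "x \<in> V" "y \<in> V" using edge_in_V[OF e] by auto
  have rx: "r' x = r x + 1" "r x \<le> r y" "r y \<le> 0"
    using rising_move[OF c st xy(1) neg nn(1)] e neg by auto
  have "r' y = 0"
  proof (cases "r y < 0")
    case True
    then have "r' y = r y + 1" using rising_move[OF c st xy(2) True nn(2)] by simp
    then show ?thesis using rx True nn by linarith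
  next
    case False
    then show ?thesis using zero_beside_negative_stays[OF st _ edge_sym[OF e] neg] rx by simp
  qed
  then show ?thesis using rx neg nn by simp
qed

lemma bad_before_step:
  assumes c: "is_config V E r" and st: "step_did V E r S r'" and e: "E u w" and bd: "bad r' u w"
  shows "bad r u w"
proof (rule ccontr)
  assume nb: "\<not> bad r u w"
  have nn: "0 \<le> r' u" "0 \<le> r' w" and ncr: "\<not> correct V E r' u w" using bd by (auto simp: bad_def)
  show False
  proof (cases "r u < 0 \<or> r w < 0")
    case True
    then have "r' u = 0 \<and> r' w = 0"
      using rise_beside_edge[OF c st e _ nn] rise_beside_edge[OF c st edge_sym[OF e] _ nn(2,1)] by blast
    then show False using ncr K_ge_3 by (simp add: correct_iff)
  next
    case False
    then have "correct V E r u w" using nb by (auto simp: bad_def)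
    then show False using correct_preserved[OF st e _ nn] ncr by simp
  qed
qed

end

section \<open>Resets and their causes\<close>

context emss_exec
begin

definition resets :: "(nat \<times> 'v) set" where
  "resets = {(t, u). u \<in> A t \<and> reInit V E (\<sigma> t) u}"

lemma reset_facts:
  assumes "(t, u) \<in> resets"
  shows "u \<in> V \<and> 0 < \<sigma> t u \<and> \<sigma> (Suc t) u = - N \<and> \<not> tousCorrects V E (\<sigma> t) u"
proof -
  have a: "u \<in> A t" "reInit V E (\<sigma> t) u" using assms by (auto simp: resets_def)
  have u: "u \<in> V" using a A_in_V by auto
  have p: "0 < \<sigma> t u" using a(2) config_bounds[OF config_at u] by (auto simp: reInit_def)
  have "\<sigma> (Suc t) u = - N" using moved_by_rule[OF steps a(1)] a(2) p
    by (auto simp: reInit_def etapeNorm_def etapeConv_def)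
  then show ?thesis using u p a(2) by (auto simp: reInit_def)
qed

lemma bad_before:
  assumes e: "E u w"
  shows "bad (\<sigma> t) u w \<Longrightarrow> i \<le> t \<Longrightarrow> bad (\<sigma> i) u w"
proof (induction t)
  case 0
  then show ?case by simp
next
  case (Suc t)
  then show ?case using bad_before_step[OF config_at steps e] by (cases "i = Suc t") auto
qed

lemma rising_in_execution:
  assumes u: "u \<in> V" and L: "\<sigma> a u < L" "L \<le> \<sigma> b u" "L \<le> 1" "a \<le> b"
  shows "\<exists>j. a \<le> j \<and> j < b \<and> \<sigma> j u = L - 1
    \<and> (\<forall>x. E u x \<longrightarrow> \<sigma> j u \<le> \<sigma> j x \<and> (\<sigma> j u < 0 \<longrightarrow> \<sigma> j x \<le> 0))"
proof -
  obtain j where j: "a \<le> j" "j < b" "\<sigma> j u < L" "L \<le> \<sigma> (Suc j) u"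
    using first_crossing[of "\<lambda>i. \<sigma> i u" a L b] L by auto
  from rising_move[OF config_at steps u j(3,4) L(3)] j show ?thesis by (intro exI[of _ j]) auto
qed

lemma between_resets:
  assumes e1: "(t1, u) \<in> resets" and e2: "(t2, u) \<in> resets" and lt: "t1 < t2"
  shows "\<exists>j. t1 < j \<and> j < t2 \<and> (\<forall>x. E u x \<longrightarrow> 0 \<le> \<sigma> j x)"
proof -
  have f1: "u \<in> V" "\<sigma> (Suc t1) u = - N" using reset_facts[OF e1] by auto
  have "0 < \<sigma> t2 u" using reset_facts[OF e2] by auto
  then obtain j where "Suc t1 \<le> j" "j < t2" "\<sigma> j u = 0" "\<forall>x. E u x \<longrightarrow> \<sigma> j u \<le> \<sigma> j x"
    using rising_in_execution[OF f1(1), of "Suc t1" 1 t2] f1(2) N_ge_1 lt by force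
  then show ?thesis by (intro exI[of _ j]) auto
qed

text \<open>A clock that is positive at time \<open>t\<close> stays positive while a neighbour is negative: to
  become positive it would have to leave \<open>0\<close> with all neighbours nonnegative.\<close>
lemma positive_beside_negative:
  assumes u: "u \<in> V" and e: "E u w" and pos: "0 < \<sigma> t u"
    and neg: "\<forall>j. i < j \<and> j \<le> t \<longrightarrow> \<sigma> j w < 0" and j: "i < j" "j \<le> t"
  shows "0 < \<sigma> j u"
proof (rule ccontr)
  assume "\<not> 0 < \<sigma> j u"
  then obtain j' where j': "j \<le> j'" "j' < t" "\<sigma> j' u = 0" "\<sigma> j' u \<le> \<sigma> j' w"
    using rising_in_execution[OF u, of j 1 t] pos j e by force
  then have "\<sigma> j' w < 0" using neg j(1) by simp
  then show False using j' by simp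
qed

definition caused_by :: "nat \<times> 'v \<Rightarrow> nat \<times> 'v \<Rightarrow> bool" where
  "caused_by e' e \<longleftrightarrow> E (snd e') (snd e) \<and> fst e' < fst e \<and>
     (\<forall>i. fst e' < i \<and> i \<le> fst e \<longrightarrow> \<sigma> i (snd e') < 0 \<and> 0 < \<sigma> i (snd e))"

text \<open>Uncaused resets have one of two kinds: next to a neighbour that has been negative since
  time \<open>0\<close>, or across an edge that has been bad since time \<open>0\<close>.\<close>
definition reset_beside_negative :: "'v \<Rightarrow> 'v \<Rightarrow> (nat \<times> 'v) set" where
  "reset_beside_negative u w = {e \<in> resets. snd e = u \<and> E u w \<and> (\<forall>i\<le>fst e. \<sigma> i w < 0)}"

definition reset_on_bad_edge :: "'v \<Rightarrow> 'v \<Rightarrow> (nat \<times> 'v) set" where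
  "reset_on_bad_edge u w = {e \<in> resets. snd e = u \<and> E u w \<and> bad (\<sigma> (fst e)) u w}"

lemma reset_origin:
  assumes e: "e \<in> resets"
  shows "(\<exists>u\<in>V. \<exists>w\<in>V. e \<in> reset_beside_negative u w \<union> reset_on_bad_edge u w)
    \<or> (\<exists>e'\<in>resets. caused_by e' e)"
proof -
  obtain t u where tu: "e = (t, u)" by (cases e)
  have f: "u \<in> V" "0 < \<sigma> t u" "\<not> tousCorrects V E (\<sigma> t) u" using reset_facts e tu by auto
  then obtain w where w: "E u w" "\<not> correct V E (\<sigma> t) u w" by (auto simp: tousCorrects_def vois_def)
  have wV: "w \<in> V" using edge_in_V[OF w(1)] by simp
  consider (nonneg) "0 \<le> \<sigma> t w" | (always_neg) "\<forall>i\<le>t. \<sigma> i w < 0"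
    | (became_neg) i0 where "\<sigma> t w < 0" "i0 \<le> t" "0 \<le> \<sigma> i0 w"
    by (meson not_le)
  then show ?thesis
  proof cases
    case nonneg
    then have "bad (\<sigma> t) u w" using f w by (auto simp: bad_def)
    then show ?thesis using e tu w wV f by (auto simp: reset_on_bad_edge_def)
  next
    case always_neg
    then show ?thesis using e tu w wV f by (auto simp: reset_beside_negative_def)
  next
    case became_neg
    then have "i0 < t" using le_neq_implies_less by fastforce
    obtain i where i: "i < t" "0 \<le> \<sigma> i w" "\<forall>j. i < j \<and> j \<le> t \<longrightarrow> \<sigma> j w < 0"
      using last_holding[of "\<lambda>i. 0 \<le> \<sigma> i w", OF became_neg(3) _ \<open>i0 < t\<close>] became_neg(1)
      by (auto simp: not_le)
    have "\<sigma> (Suc i) w < 0" using i by simp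
    then have reset: "(i, w) \<in> resets"
      using falling_move[OF config_at steps i(2)] by (auto simp: resets_def)
    have "caused_by (i, w) (t, u)"
      using positive_beside_negative[OF f(1) w(1) f(2) i(3)] i edge_sym[OF w(1)]
      by (auto simp: caused_by_def)
    then show ?thesis using reset tu by blast
  qed
qed

lemma reset_beside_negative_finite: "finite (reset_beside_negative u w)"
proof (rule finite_single_event)
  show "reset_beside_negative u w \<subseteq> UNIV \<times> {u}" by (auto simp: reset_beside_negative_def)
  fix t1 t2 assume a: "(t1, u) \<in> reset_beside_negative u w" "(t2, u) \<in> reset_beside_negative u w"
    and lt: "t1 < t2"
  then have ev: "(t1, u) \<in> resets" "(t2, u) \<in> resets" "E u w" "\<forall>i\<le>t2. \<sigma> i w < 0"
    by (auto simp: reset_beside_negative_def)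
  obtain j where j: "j < t2" "\<forall>x. E u x \<longrightarrow> 0 \<le> \<sigma> j x" using between_resets[OF ev(1,2) lt] by auto
  then have "0 \<le> \<sigma> j w" using ev(3) by blast
  moreover have "\<sigma> j w < 0" using ev(4) j(1) by simp
  ultimately show False by simp
qed

lemma reset_on_bad_edge_finite: "finite (reset_on_bad_edge u w)"
proof (rule finite_single_event)
  show "reset_on_bad_edge u w \<subseteq> UNIV \<times> {u}" by (auto simp: reset_on_bad_edge_def)
  fix t1 t2 assume a: "(t1, u) \<in> reset_on_bad_edge u w" "(t2, u) \<in> reset_on_bad_edge u w"
    and lt: "t1 < t2"
  then have "E u w" "bad (\<sigma> t2) u w" by (auto simp: reset_on_bad_edge_def)
  then have "bad (\<sigma> (Suc t1)) u w" using bad_before lt by simp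
  moreover have "\<sigma> (Suc t1) u = - N" using reset_facts a by (auto simp: reset_on_bad_edge_def)
  ultimately show False using N_ge_1 by (auto simp: bad_def)
qed

lemma caused_resets_finite: "finite {e \<in> resets. snd e = u \<and> caused_by e' e}"
proof (rule finite_single_event)
  show "{e \<in> resets. snd e = u \<and> caused_by e' e} \<subseteq> UNIV \<times> {u}" by auto
  fix t1 t2 assume a: "(t1, u) \<in> {e \<in> resets. snd e = u \<and> caused_by e' e}"
    "(t2, u) \<in> {e \<in> resets. snd e = u \<and> caused_by e' e}" and lt: "t1 < t2"
  then have c: "E (snd e') u" "fst e' < t1" "\<forall>i. fst e' < i \<and> i \<le> t2 \<longrightarrow> \<sigma> i (snd e') < 0"
    by (auto simp: caused_by_def)
  obtain j where j: "t1 < j" "j < t2" "\<forall>x. E u x \<longrightarrow> 0 \<le> \<sigma> j x"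
    using between_resets[of t1 u t2] a lt by auto
  then have "0 \<le> \<sigma> j (snd e')" using edge_sym[OF c(1)] by blast
  moreover have "\<sigma> j (snd e') < 0" using c(2,3) j(1,2) by simp
  ultimately show False by simp
qed

section \<open>Causal chains are short\<close>

definition cause_chain :: "(nat \<Rightarrow> nat \<times> 'v) \<Rightarrow> nat \<Rightarrow> bool" where
  "cause_chain ch m \<longleftrightarrow> (\<forall>j\<le>m. ch j \<in> resets) \<and> (\<forall>j<m. caused_by (ch j) (ch (Suc j)))"

lemma cause_chain_times:
  assumes ch: "cause_chain ch m" and "j \<le> j'" "j' \<le> m"
  shows "fst (ch j) \<le> fst (ch j')"
  using assms(2,3)
proof (induction j' rule: dec_induct)
  case base
  then show ?case by simp
next
  case (step k)
  then have "fst (ch k) < fst (ch (Suc k))" using ch by (auto simp: cause_chain_def caused_by_def)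
  then show ?case using step by simp
qed

text \<open>The key delay argument: if the processor of the \<open>j\<close>-th reset has climbed back to
  \<open>L \<le> 1\<close> by time \<open>\<tau>\<close>, the processor of the next reset in the chain had already reached
  \<open>L - 1\<close> at some time after its own reset and before \<open>\<tau>\<close> (it bounds the climb from above).\<close>
lemma climb_delayed_by_cause:
  assumes ch: "cause_chain ch m" and j: "j < m" and L: "L \<le> 1" "- N < L"
    and tau: "fst (ch j) < \<tau>" "L \<le> \<sigma> \<tau> (snd (ch j))"
  shows "\<exists>\<tau>'. fst (ch (Suc j)) < \<tau>' \<and> \<tau>' < \<tau> \<and> L - 1 \<le> \<sigma> \<tau>' (snd (ch (Suc j)))"
proof -
  obtain t w where tw: "ch j = (t, w)" by (cases "ch j")
  obtain t2 w2 where tw2: "ch (Suc j) = (t2, w2)" by (cases "ch (Suc j)")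
  have ev: "(t, w) \<in> resets" using ch less_imp_le[OF j] tw by (auto simp: cause_chain_def)
  have c: "E w w2" "\<forall>i. t < i \<and> i \<le> t2 \<longrightarrow> \<sigma> i w < 0 \<and> 0 < \<sigma> i w2"
    using ch j tw tw2 unfolding cause_chain_def caused_by_def by auto
  have f: "w \<in> V" "\<sigma> (Suc t) w = - N" using reset_facts[OF ev] by auto
  obtain j0 where j0: "Suc t \<le> j0" "j0 < \<tau>" "\<sigma> j0 w = L - 1" "\<sigma> j0 w \<le> \<sigma> j0 w2"
    "\<sigma> j0 w < 0 \<longrightarrow> \<sigma> j0 w2 \<le> 0"
    using rising_in_execution[OF f(1), of "Suc t" L \<tau>] f(2) tau tw L c(1) by force
  have "t2 < j0"
  proof (rule ccontr)
    assume "\<not> t2 < j0"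
    then have "\<sigma> j0 w < 0 \<and> 0 < \<sigma> j0 w2" using c(2) j0(1) by auto
    then show False using j0(5) by auto
  qed
  then show ?thesis using j0 tw2 by (intro exI[of _ j0]) auto
qed

text \<open>Iterating the delay from position \<open>a\<close> to \<open>b - 1\<close>: if \<open>ch a\<close> and \<open>ch b\<close> reset the same
  processor, which is positive right after \<open>ch (b - 1)\<close>, each link costs one time unit.\<close>
lemma climb_along_chain:
  assumes ch: "cause_chain ch m" and ab: "a + 2 \<le> b" "b \<le> m" "b \<le> a + nproc V + 2"
    and same: "snd (ch a) = snd (ch b)"
  shows "k \<le> b - 1 - a \<Longrightarrow> \<exists>\<tau>. fst (ch (a + k)) < \<tau> \<and> \<tau> + k \<le> Suc (fst (ch (b - 1)))
    \<and> 1 - int k \<le> \<sigma> \<tau> (snd (ch (a + k)))"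
proof (induction k)
  case 0
  have b1: "Suc (b - 1) = b" using ab by auto
  have "fst (ch a) \<le> fst (ch (b - 1))" using cause_chain_times[OF ch, of a "b - 1"] ab by auto
  moreover have "caused_by (ch (b - 1)) (ch b)"
    using ch ab b1 unfolding cause_chain_def by (metis Suc_le_lessD)
  then have "0 < \<sigma> (Suc (fst (ch (b - 1)))) (snd (ch b))" by (auto simp: caused_by_def)
  ultimately show ?case using same by (intro exI[of _ "Suc (fst (ch (b - 1)))"]) auto
next
  case (Suc k)
  then obtain \<tau> where tau: "fst (ch (a + k)) < \<tau>" "\<tau> + k \<le> Suc (fst (ch (b - 1)))"
    "1 - int k \<le> \<sigma> \<tau> (snd (ch (a + k)))" by auto
  have am: "a + k < m" using Suc.prems ab by auto
  have L: "1 - int k \<le> 1" "- N < 1 - int k" using Suc.prems ab by auto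
  from climb_delayed_by_cause[OF ch am L tau(1) tau(3)] obtain \<tau>' where
    "fst (ch (Suc (a + k))) < \<tau>'" "\<tau>' < \<tau>" "1 - int k - 1 \<le> \<sigma> \<tau>' (snd (ch (Suc (a + k))))"
    by auto
  then show ?case using tau(2) by (intro exI[of _ \<tau>']) auto
qed

lemma cause_chain_distinct:
  assumes ch: "cause_chain ch m" and ab: "a < b" "b \<le> m" "b \<le> a + nproc V + 2"
  shows "snd (ch a) \<noteq> snd (ch b)"
proof
  assume same: "snd (ch a) = snd (ch b)"
  show False
  proof (cases "b = Suc a")
    case True
    then have "E (snd (ch a)) (snd (ch b))" using ch ab by (auto simp: cause_chain_def caused_by_def)
    then show False using same edge_irrefl by auto
  next
    case False
    then have ab2: "a + 2 \<le> b" using ab by auto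
    from climb_along_chain[OF ch ab2 ab(2,3) same, of "b - 1 - a"] obtain \<tau> where
      "fst (ch (a + (b - 1 - a))) < \<tau>" "\<tau> + (b - 1 - a) \<le> Suc (fst (ch (b - 1)))" by auto
    moreover have "a + (b - 1 - a) = b - 1" using ab2 by auto
    ultimately show False using ab2 by auto
  qed
qed

text \<open>A causal chain cannot have \<open>n + 1\<close> resets: their processors would be pairwise distinct.\<close>
lemma cause_chain_short: "\<not> cause_chain ch (nproc V)"
proof
  assume ch: "cause_chain ch (nproc V)"
  have inj: "inj_on (\<lambda>j. snd (ch j)) {0..nproc V}"
  proof (rule inj_onI)
    fix x y assume xy: "x \<in> {0..nproc V}" "y \<in> {0..nproc V}" "snd (ch x) = snd (ch y)"
    show "x = y"
    proof (rule ccontr)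
      assume "x \<noteq> y"
      then show False using cause_chain_distinct[OF ch, of x y] cause_chain_distinct[OF ch, of y x] xy
        by (auto simp: neq_iff)
    qed
  qed
  have "(\<lambda>j. snd (ch j)) ` {0..nproc V} \<subseteq> V"
  proof
    fix x assume "x \<in> (\<lambda>j. snd (ch j)) ` {0..nproc V}"
    then obtain j where j: "j \<le> nproc V" "x = snd (ch j)" by auto
    have "ch j \<in> resets" using ch j(1) by (simp add: cause_chain_def)
    then show "x \<in> V" using reset_facts j(2) by (cases "ch j") auto
  qed
  from card_inj_on_le[OF inj this finite_V] show False by (simp add: nproc_def)
qed

definition uncaused :: "(nat \<times> 'v) set" where
  "uncaused = {e. \<not> (\<exists>e'\<in>resets. caused_by e' e)}"

definition cause_of :: "nat \<times> 'v \<Rightarrow> nat \<times> 'v" where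
  "cause_of e = (SOME e'. e' \<in> resets \<and> caused_by e' e)"

lemma cause_of:
  assumes "e \<notin> uncaused" shows "cause_of e \<in> resets \<and> caused_by (cause_of e) e"
  using assms someI_ex[of "\<lambda>e'. e' \<in> resets \<and> caused_by e' e"]
  by (auto simp: uncaused_def cause_of_def)

lemma cause_depth:
  assumes e: "e \<in> resets"
  shows "\<exists>k\<le>nproc V. (cause_of ^^ k) e \<in> uncaused"
proof (rule ccontr)
  assume "\<not> ?thesis"
  then have caused: "(cause_of ^^ k) e \<notin> uncaused" if "k \<le> nproc V" for k using that by auto
  have in_resets: "(cause_of ^^ k) e \<in> resets" if "k \<le> nproc V" for k
    using that by (induction k) (use e caused cause_of in auto)
  define ch where "ch j = (cause_of ^^ (nproc V - j)) e" for j
  have "cause_chain ch (nproc V)"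
    unfolding cause_chain_def
  proof (intro conjI allI impI)
    fix j assume "j \<le> nproc V"
    then show "ch j \<in> resets" using in_resets by (simp add: ch_def)
  next
    fix j assume j: "j < nproc V"
    then have "nproc V - j = Suc (nproc V - Suc j)" by simp
    then have "ch j = cause_of (ch (Suc j))" by (simp add: ch_def)
    moreover have "ch (Suc j) \<notin> uncaused" using caused by (simp add: ch_def)
    ultimately show "caused_by (ch j) (ch (Suc j))" using cause_of by simp
  qed
  then show False using cause_chain_short by blast
qed

lemma resets_finite: "finite resets"
proof (rule finite_by_parent_depth)
  show "cause_of e \<in> resets" if "e \<in> resets" "e \<notin> uncaused" for e using cause_of that(2) by blast
  show "finite {x \<in> resets - uncaused. cause_of x = y}" for y
  proof (rule finite_subset)
    show "{x \<in> resets - uncaused. cause_of x = y} \<subseteq> (\<Union>u\<in>V. {e \<in> resets. snd e = u \<and> caused_by y e})"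
      using cause_of reset_facts by fastforce
    show "finite (\<Union>u\<in>V. {e \<in> resets. snd e = u \<and> caused_by y e})"
      using finite_V caused_resets_finite by blast
  qed
  show "finite (resets \<inter> uncaused)"
  proof (rule finite_subset)
    show "resets \<inter> uncaused \<subseteq> (\<Union>u\<in>V. \<Union>w\<in>V. reset_beside_negative u w \<union> reset_on_bad_edge u w)"
    proof
      fix e assume "e \<in> resets \<inter> uncaused"
      then show "e \<in> (\<Union>u\<in>V. \<Union>w\<in>V. reset_beside_negative u w \<union> reset_on_bad_edge u w)"
        using reset_origin[of e] by (auto simp: uncaused_def)
    qed
    show "finite (\<Union>u\<in>V. \<Union>w\<in>V. reset_beside_negative u w \<union> reset_on_bad_edge u w)"
      using finite_V reset_beside_negative_finite reset_on_bad_edge_finite by blast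
  qed
  show "\<exists>k\<le>nproc V. (cause_of ^^ k) e \<in> uncaused" if "e \<in> resets" for e
    using cause_depth that .
qed

lemma eventually_no_reset: "\<exists>T. \<forall>t\<ge>T. \<forall>u\<in>A t. \<not> reInit V E (\<sigma> t) u"
proof -
  obtain M where M: "\<forall>t\<in>fst ` resets. t \<le> M"
    using resets_finite finite_nat_set_iff_bounded_le by blast
  have "\<not> reInit V E (\<sigma> t) u" if "Suc M \<le> t" "u \<in> A t" for t u
    using that M by (force simp: resets_def)
  then show ?thesis by blast
qed

section \<open>Convergence\<close>

text \<open>After the last reset, moves are NA or CA moves and never decrease a clock below zero, so
  the total negative mass only decreases, strictly at each move of a negative clock.\<close>
lemma eventually_normal: "\<exists>T. normal_from T"
proof -
  obtain T where T: "\<And>t u. T \<le> t \<Longrightarrow> u \<in> A t \<Longrightarrow> \<not> reInit V E (\<sigma> t) u"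
    using eventually_no_reset by blast
  have moved: "\<sigma> (Suc i) v = phi V E (\<sigma> i v)" if "T \<le> i" "v \<in> A i" for i v
    using moved_by_rule[OF steps that(2)] T[OF that] by (auto simp: etapeConv_def phi_neg)
  have deficit_step: "nat (- \<sigma> (Suc i) v) \<le> nat (- \<sigma> i v)
      \<and> (v \<in> A i \<and> \<sigma> i v < 0 \<longrightarrow> nat (- \<sigma> (Suc i) v) < nat (- \<sigma> i v))"
    if i: "T \<le> i" and v: "v \<in> V" for i v
  proof (cases "v \<in> A i")
    case True
    have b: "- N \<le> \<sigma> i v" "\<sigma> i v < K" using config_bounds[OF config_at v] by auto
    then show ?thesis using moved[OF i True] phi_neg phi_nonneg[of "\<sigma> i v"] by (cases "\<sigma> i v < 0") auto
  next
    case False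
    then show ?thesis using unmoved_at by simp
  qed
  define deficit where "deficit i = (\<Sum>v\<in>V. nat (- \<sigma> i v))" for i
  have mono: "deficit (Suc i) \<le> deficit i" if "T \<le> i" for i
    unfolding deficit_def by (rule sum_mono) (use deficit_step[OF that] in blast)
  have dec: "deficit (Suc i) < deficit i" if i: "T \<le> i" and neg: "\<exists>v\<in>A i. \<sigma> i v < 0" for i
  proof -
    obtain v where v: "v \<in> A i" "\<sigma> i v < 0" using neg by blast
    have vV: "v \<in> V" using A_in_V v(1) by auto
    show ?thesis unfolding deficit_def
      by (rule sum_strict_mono_ex1[OF finite_V]) (use deficit_step[OF i] v vV in auto)
  qed
  obtain T2 where T2: "T \<le> T2" "\<forall>i\<ge>T2. \<not> (\<exists>v\<in>A i. \<sigma> i v < 0)"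
    using potential_eventually_no_event[of T deficit "\<lambda>i. \<exists>v\<in>A i. \<sigma> i v < 0", OF mono dec]
    by blast
  have "normal_from T2" unfolding normal_from_def
  proof (intro allI impI ballI)
    fix i v assume i: "T2 \<le> i" and v: "v \<in> A i"
    have "0 \<le> \<sigma> i v" using T2(2) i v by (meson not_less)
    moreover have "\<not> reInit V E (\<sigma> i) v" using T[of i v] T2(1) i v by simp
    ultimately show "0 \<le> \<sigma> i v \<and> etapeNorm V E (\<sigma> i) v \<and> \<sigma> (Suc i) v = phi V E (\<sigma> i v)"
      using moved_by_rule[OF steps v] by (auto simp: etapeConv_def)
  qed
  then show ?thesis ..
qed

theorem reaches_legit: "\<exists>t. legit (\<sigma> t)"
  using eventually_normal normal_phase_reaches_legit by blast

end


lemma (in emss_graph) execution_run: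
  assumes c: "is_config V E r0" and ex: "is_exec_did V E r0 \<sigma> A len"
  shows "len = \<infinity> \<and> emss_exec V E \<sigma> A"
proof -
  have len: "len = \<infinity>" using execution_infinite[OF c ex] .
  have "emss_exec V E \<sigma> A"
    by unfold_locales (use ex len c in \<open>auto simp: is_exec_did_def\<close>)
  then show ?thesis using len by simp
qed

theorem theorem1:
  fixes V :: "'v set" and E :: "'v \<Rightarrow> 'v \<Rightarrow> bool" and ident :: "'v \<Rightarrow> nat"
  assumes "is_conn_graph V E"
    and "bij_betw ident V {0..<nproc V}"
  shows "self_stab_EMSS_did V E ident"
proof -
  interpret emss_graph V E by unfold_locales (rule assms(1))
  show ?thesis unfolding self_stab_EMSS_did_def
  proof (intro allI impI)
    fix r0 \<sigma> A len assume c: "is_config V E r0" and ex: "is_exec_did V E r0 \<sigma> A len"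
    then interpret run: emss_exec V E \<sigma> A using execution_run by blast
    obtain t where t: "legit (\<sigma> t)" using run.reaches_legit by blast
    show "\<exists>i. enat i \<le> len \<and>
      (\<forall>\<sigma>' A' len'. is_exec_did V E (\<sigma> i) \<sigma>' A' len' \<longrightarrow> spec_EM V E ident \<sigma>' A' len')"
    proof (intro exI[of _ t] conjI allI impI)
      show "enat t \<le> len" using execution_run[OF c ex] by simp
      fix \<sigma>' A' len' assume ex': "is_exec_did V E (\<sigma> t) \<sigma>' A' len'"
      then have len': "len' = \<infinity>" and "emss_exec V E \<sigma>' A'"
        using execution_run[OF legit_config[OF t]] by blast+
      then interpret run': emss_exec V E \<sigma>' A' by simp
      have "legit (\<sigma>' 0)" using ex' t by (simp add: is_exec_did_def)
      then show "spec_EM V E ident \<sigma>' A' len'" using run'.legit_spec[OF _ assms(2)] len' by simp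
    qed
  qed
qed

end
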